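(* Let $A\in\mathbb{R}^{m\times N}$ with $N=pn$, let $\mathbf{x}\in\mathbb{R}^N$ be arbitrary, let $k\in\{1,\dots,p\}$, let $\phi_k(\mathbf{x})=\inf_{\mathbf{z}\in\mathbb{R}^N,\lVert\mathbf{z}\rVert_{2,0}=k}\lVert\mathbf{x}-\mathbf{z}\rVert_{2,1}$, and let $\mathbf{y}=A\mathbf{x}+\boldsymbol{\epsilon}$. For any $q\in(1,\infty]$: 1) If $\lVert\boldsymbol{\epsilon}\rVert_2\le\zeta$, then the solution $\hat{\mathbf{x}}$ of the block basis pursuit $\min_{\mathbf{z}}\lVert\mathbf{z}\rVert_{2,1}$ s.t. $\lVert\mathbf{y}-A\mathbf{z}\rVert_2\le\zeta$ obeys $$\lVert\hat{\mathbf{x}}-\mathbf{x}\rVert_{2,q}\le\frac{2\zeta}{\beta_{q,4^{\frac{q}{q-1}}k}(A)}+k^{1/q-1}\phi_k(\mathbf{x}),\qquad \lVert\hat{\mathbf{x}}-\mathbf{x}\rVert_{2,1}\le\frac{4k^{1-1/q}\zeta}{\beta_{q,4^{\frac{q}{q-1}}k}(A)}+4\phi_k(\mathbf{x}).$$ 2) If $\lVert A^T\boldsymbol{\epsilon}\rVert_{2,\infty}\le\mu$, then the solution $\hat{\mathbf{x}}$ of the block Dantzig selector $\min_{\mathbf{z}}\lVert\mathbf{z}\rVert_{2,1}$ s.t. $\lVert A^T(\mathbf{y}-A\mathbf{z})\rVert_{2,\infty}\le\mu$ obeys $$\lVert\hat{\mathbf{x}}-\mathbf{x}\rVert_{2,q}\le\frac{8k^{1-1/q}}{\beta^2_{q,4^{\frac{q}{q-1}}k}(A)}\mu+k^{1/q-1}\phi_k(\mathbf{x}),\qquad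 \lVert\hat{\mathbf{x}}-\mathbf{x}\rVert_{2,1}\le\frac{16k^{2-2/q}}{\beta^2_{q,4^{\frac{q}{q-1}}k}(A)}\mu+4\phi_k(\mathbf{x}).$$ 3) If $\lVert A^T\boldsymbol{\epsilon}\rVert_{2,\infty}\le\kappa\mu$ for some $\kappa\in(0,1)$, then the solution $\hat{\mathbf{x}}$ of the group lasso $\min_{\mathbf{z}}\frac12\lVert\mathbf{y}-A\mathbf{z}\rVert_2^2+\mu\lVert\mathbf{z}\rVert_{2,1}$ obeys $$\lVert\hat{\mathbf{x}}-\mathbf{x}\rVert_{2,q}\le\frac{1+\kappa}{1-\kappa}\cdot\frac{4k^{1-1/q}}{\beta^2_{q,(\frac{4}{1-\kappa})^{\frac{q}{q-1}}k}(A)}\mu+k^{1/q-1}\phi_k(\mathbf{x}),$$ $$\lVert\hat{\mathbf{x}}-\mathbf{x}\rVert_{2,1}\le\frac{1+\kappa}{(1-\kappa)^2}\cdot\frac{8k^{2-2/q}}{\beta^2_{q,(\frac{4}{1-\kappa})^{\frac{q}{q-1}}k}(A)}\mu+\frac{4}{1-\kappa}\phi_k(\mathbf{x}).$$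
   Context: Every $\mathbf{x}\in\mathbb{R}^N$ is partitioned into $p$ consecutive blocks of length $n$: $\mathbf{x}=[\mathbf{x}_1^T,\dots,\mathbf{x}_p^T]^T$, $\mathbf{x}_i\in\mathbb{R}^n$. Mixed norms: $\lVert\mathbf{x}\rVert_{2,0}=\#\{i:\mathbf{x}_i\ne\mathbf{0}\}$, $\lVert\mathbf{x}\rVert_{2,q}=(\sum_{i=1}^p\lVert\mathbf{x}_i\rVert_2^q)^{1/q}$ for $0<q<\infty$, $\lVert\mathbf{x}\rVert_{2,\infty}=\max_i\lVert\mathbf{x}_i\rVert_2$. For nonzero $\mathbf{x}$ and $q\in(1,\infty)$, $k_q(\mathbf{x})=\left(\lVert\mathbf{x}\rVert_{2,1}/\lVert\mathbf{x}\rVert_{2,q}\right)^{q/(q-1)}$, and $k_\infty(\mathbf{x})=\lVert\mathbf{x}\rVert_{2,1}/\lVert\mathbf{x}\rVert_{2,\infty}$. For $q\in(1,\infty]$ and real $s\ge1$, $\beta_{q,s}(A)=\min_{\mathbf{z}\ne\mathbf{0},\,k_q(\mathbf{z})\le s}\lVert A\mathbf{z}\rVert_2/\lVert\mathbf{z}\rVert_{2,q}$ (the paper defines it for $s\in[1,p]$; for $s\ge p$ the constraint is vacuous since $k_q\le p$). For $q=\infty$, $q/(q-1)$ is read as $1$ and $1/q$ as $0$. The parameters $\zeta\ge0$, $\mu>0$ are given; bounds are understood as $+\infty$ when the relevant $\beta$ is $0$. *)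

theory Defs
  imports "HOL-Analysis.Analysis" "HOL-Library.Extended_Real"
begin

text \<open>Vectors of R^N are functions nat => real vanishing outside {..<N}.
  A vector of R^{p n} is split into p consecutive blocks of length n.\<close>

definition in_RN :: "nat \<Rightarrow> (nat \<Rightarrow> real) \<Rightarrow> bool" where
  "in_RN N z \<longleftrightarrow> (\<forall>j\<ge>N. z j = 0)"

definition norm2 :: "nat \<Rightarrow> (nat \<Rightarrow> real) \<Rightarrow> real" where
  "norm2 m v = sqrt (\<Sum>i<m. (v i)^2)"

definition matvec :: "nat \<Rightarrow> (nat \<Rightarrow> nat \<Rightarrow> real) \<Rightarrow> (nat \<Rightarrow> real) \<Rightarrow> (nat \<Rightarrow> real)" where
  "matvec N A z = (\<lambda>i. \<Sum>j<N. A i j * z j)"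

definition tmatvec :: "nat \<Rightarrow> (nat \<Rightarrow> nat \<Rightarrow> real) \<Rightarrow> (nat \<Rightarrow> real) \<Rightarrow> (nat \<Rightarrow> real)" where
  "tmatvec m A v = (\<lambda>j. \<Sum>i<m. A i j * v i)"

definition bnorm :: "nat \<Rightarrow> (nat \<Rightarrow> real) \<Rightarrow> nat \<Rightarrow> real" where
  "bnorm n x i = sqrt (\<Sum>j<n. (x (i * n + j))^2)"

definition norm20 :: "nat \<Rightarrow> nat \<Rightarrow> (nat \<Rightarrow> real) \<Rightarrow> nat" where
  "norm20 n p x = card {i. i < p \<and> bnorm n x i \<noteq> 0}"

definition norm21 :: "nat \<Rightarrow> nat \<Rightarrow> (nat \<Rightarrow> real) \<Rightarrow> real" where
  "norm21 n p x = (\<Sum>i<p. bnorm n x i)"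

definition mixnorm :: "nat \<Rightarrow> nat \<Rightarrow> ereal \<Rightarrow> (nat \<Rightarrow> real) \<Rightarrow> real" where
  "mixnorm n p q x =
     (if q = \<infinity> then Max (bnorm n x ` {..<p})
      else (\<Sum>i<p. bnorm n x i powr real_of_ereal q) powr (1 / real_of_ereal q))"

text \<open>q/(q-1), read as 1 for q = infinity; and 1/q, read as 0 for q = infinity.\<close>
definition qexp :: "ereal \<Rightarrow> real" where
  "qexp q = (if q = \<infinity> then 1 else real_of_ereal q / (real_of_ereal q - 1))"

definition invq :: "ereal \<Rightarrow> real" where
  "invq q = (if q = \<infinity> then 0 else 1 / real_of_ereal q)"

definition kq :: "nat \<Rightarrow> nat \<Rightarrow> ereal \<Rightarrow> (nat \<Rightarrow> real) \<Rightarrow> real" where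
  "kq n p q x = (norm21 n p x / mixnorm n p q x) powr qexp q"

text \<open>beta_{q,s}(A): the minimum (attained, written as infimum) over nonzero z in R^{pn}
  with k_q(z) <= s of ||Az||_2 / ||z||_{2,q}.\<close>
definition beta :: "nat \<Rightarrow> nat \<Rightarrow> nat \<Rightarrow> ereal \<Rightarrow> real \<Rightarrow> (nat \<Rightarrow> nat \<Rightarrow> real) \<Rightarrow> real" where
  "beta n p m q s A = Inf {norm2 m (matvec (p * n) A z) / mixnorm n p q z | z.
      in_RN (p * n) z \<and> z \<noteq> (\<lambda>_. 0) \<and> kq n p q z \<le> s}"

definition phi :: "nat \<Rightarrow> nat \<Rightarrow> nat \<Rightarrow> (nat \<Rightarrow> real) \<Rightarrow> real" where
  "phi n p k x = Inf {norm21 n p (x - z) | z. in_RN (p * n) z \<and> norm20 n p z = k}"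

definition bp_sol where
  "bp_sol n p m A y \<zeta> xh \<longleftrightarrow>
     in_RN (p * n) xh \<and> norm2 m (y - matvec (p * n) A xh) \<le> \<zeta> \<and>
     (\<forall>z. in_RN (p * n) z \<and> norm2 m (y - matvec (p * n) A z) \<le> \<zeta> \<longrightarrow>
          norm21 n p xh \<le> norm21 n p z)"

definition ds_sol where
  "ds_sol n p m A y \<mu> xh \<longleftrightarrow>
     in_RN (p * n) xh \<and> mixnorm n p \<infinity> (tmatvec m A (y - matvec (p * n) A xh)) \<le> \<mu> \<and>
     (\<forall>z. in_RN (p * n) z \<and> mixnorm n p \<infinity> (tmatvec m A (y - matvec (p * n) A z)) \<le> \<mu> \<longrightarrow>
          norm21 n p xh \<le> norm21 n p z)"

definition lasso_obj where
  "lasso_obj n p m A y \<mu> z = 1/2 * (norm2 m (y - matvec (p * n) A z))^2 + \<mu> * norm21 n p z"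

definition lasso_sol where
  "lasso_sol n p m A y \<mu> xh \<longleftrightarrow>
     in_RN (p * n) xh \<and>
     (\<forall>z. in_RN (p * n) z \<longrightarrow> lasso_obj n p m A y \<mu> xh \<le> lasso_obj n p m A y \<mu> z)"

end

theory Submission
  imports Defs
begin

text \<open>Write h = xh - x and K = k^(1-1/q). Optimality of xh gives
  ||xh||_{2,1} <= ||x||_{2,1} + kappa ||h||_{2,1}: with kappa = 0 for basis pursuit and the Dantzig
  selector, where x is feasible, and for the lasso by comparing objectives and bounding
  <eps, Ah> = <h, A^T eps>. Comparing with a k-block-sparse z and applying Hoelder's inequality on
  the support of z turns this into the cone inequality
  (1 - kappa) ||h||_{2,1} <= 2 K ||h||_{2,q} + 2 phi_k(x).
  Either phi_k(x) dominates K ||h||_{2,q}, which bounds ||h||_{2,q} directly, or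
  k_q(h) <= (4/(1-kappa))^(q/(q-1)) k, so that beta ||h||_{2,q} <= ||Ah||_2. For basis pursuit
  ||Ah||_2 <= 2 zeta; for the other two programs
  ||Ah||_2^2 = <h, A^T A h> <= ||h||_{2,1} ||A^T A h||_{2,inf}, and A^T A h is the difference of
  the correlations of the two residuals with A, bounded by the constraint or, for the lasso, by its
  first-order optimality condition ||A^T (y - A xh)||_{2,inf} <= mu.\<close>

section \<open>Mixed block norms\<close>

lemma bnorm_eq_L2_set: "bnorm n x i = L2_set (\<lambda>j. x (i * n + j)) {..<n}"
  by (simp add: bnorm_def L2_set_def)

lemma bnorm_nonneg: "0 \<le> bnorm n x i"
  by (simp add: bnorm_def sum_nonneg)

lemma bnorm_eq_0_iff: "bnorm n z i = 0 \<longleftrightarrow> (\<forall>j<n. z (i * n + j) = 0)"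
  by (auto simp: bnorm_def sum_nonneg_eq_0_iff)

lemma bnorm_add_le: "bnorm n (\<lambda>j. x j + y j) i \<le> bnorm n x i + bnorm n y i"
  unfolding bnorm_eq_L2_set by (rule L2_set_triangle_ineq)

lemma bnorm_diff_le: "bnorm n (x - y) i \<le> bnorm n x i + bnorm n y i"
  using bnorm_add_le[of n x "\<lambda>j. - y j" i] by (simp add: bnorm_def)

lemma bnorm_mult: "bnorm n (\<lambda>j. c * x j) i = \<bar>c\<bar> * bnorm n x i"
  by (simp add: bnorm_def power_mult_distrib sum_distrib_left[symmetric] real_sqrt_mult)

lemma norm21_nonneg: "0 \<le> norm21 n p x"
  by (simp add: norm21_def sum_nonneg bnorm_nonneg)

lemma norm21_split:
  assumes "S \<subseteq> {..<p}"
  shows "norm21 n p h = (\<Sum>i\<in>S. bnorm n h i) + (\<Sum>i\<in>{..<p} - S. bnorm n h i)"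
  unfolding norm21_def using assms by (simp add: sum.subset_diff add.commute)

lemma mixnorm_nonneg:
  assumes "0 < p"
  shows "0 \<le> mixnorm n p q h"
proof (cases "q = \<infinity>")
  case True
  have "0 \<le> bnorm n h 0" by (rule bnorm_nonneg)
  also have "\<dots> \<le> Max (bnorm n h ` {..<p})" using assms by (intro Max_ge) auto
  finally show ?thesis using True by (simp add: mixnorm_def)
qed (simp add: mixnorm_def)

lemma mixnorm_zero: "0 < p \<Longrightarrow> mixnorm n p q (\<lambda>_. 0) = 0"
  by (auto simp: mixnorm_def bnorm_def image_constant_conv lessThan_empty_iff)

lemma mixnorm_inf_diff_le:
  assumes "0 < p"
  shows "mixnorm n p \<infinity> (u - v) \<le> mixnorm n p \<infinity> u + mixnorm n p \<infinity> v"
proof -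
  have "bnorm n (u - v) i \<le> Max (bnorm n u ` {..<p}) + Max (bnorm n v ` {..<p})" if "i < p" for i
  proof -
    have "bnorm n u i \<le> Max (bnorm n u ` {..<p})" "bnorm n v i \<le> Max (bnorm n v ` {..<p})"
      using that by (auto intro!: Max_ge)
    then show ?thesis using bnorm_diff_le[of n u v i] by linarith
  qed
  then show ?thesis using assms by (simp add: mixnorm_def Max_le_iff lessThan_empty_iff)
qed

lemma sum_lessThan_mult_blocks:
  fixes p n :: nat
  shows "(\<Sum>j<p * n. f j) = (\<Sum>i<p. \<Sum>j<n. f (i * n + j))"
  unfolding sum.nat_group[symmetric]
  by (simp add: sum.atLeastLessThan_shift_0 comp_def atLeast0LessThan)

lemma sum_mult_le_norm21_mult_mixnorm_inf:
  "(\<Sum>j<p * n. h j * g j) \<le> norm21 n p h * mixnorm n p \<infinity> g"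
proof -
  have "(\<Sum>j<p * n. h j * g j) = (\<Sum>i<p. \<Sum>j<n. h (i * n + j) * g (i * n + j))"
    by (rule sum_lessThan_mult_blocks)
  also have "\<dots> \<le> (\<Sum>i<p. bnorm n h i * bnorm n g i)"
  proof (rule sum_mono)
    fix i
    have "(\<Sum>j<n. h (i * n + j) * g (i * n + j)) \<le> (\<Sum>j<n. \<bar>h (i * n + j)\<bar> * \<bar>g (i * n + j)\<bar>)"
      by (intro sum_mono) (metis abs_ge_self abs_mult)
    also have "\<dots> \<le> bnorm n h i * bnorm n g i"
      unfolding bnorm_eq_L2_set by (rule L2_set_mult_ineq)
    finally show "(\<Sum>j<n. h (i * n + j) * g (i * n + j)) \<le> bnorm n h i * bnorm n g i" .
  qed
  also have "\<dots> \<le> (\<Sum>i<p. bnorm n h i * mixnorm n p \<infinity> g)"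
    by (intro sum_mono mult_left_mono bnorm_nonneg) (auto simp: mixnorm_def)
  also have "\<dots> = norm21 n p h * mixnorm n p \<infinity> g"
    by (simp add: norm21_def sum_distrib_right)
  finally show ?thesis .
qed

lemma powr_mean_le_mean_powr:
  fixes b :: "'a \<Rightarrow> real"
  assumes "finite S" "S \<noteq> {}" "\<And>i. i \<in> S \<Longrightarrow> 0 < b i" "1 \<le> r"
  shows "((\<Sum>i\<in>S. b i) / card S) powr r \<le> (\<Sum>i\<in>S. b i powr r) / card S"
proof -
  have "(\<Sum>i\<in>S. (1 / card S) *\<^sub>R b i) powr r \<le> (\<Sum>i\<in>S. (1 / card S) * b i powr r)"
    using convex_on_sum[OF assms(1,2) powr_convex[OF assms(4)], of "\<lambda>_. 1 / card S" b] assms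
    by auto
  then show ?thesis
    by (simp add: sum_distrib_left[symmetric] sum_divide_distrib[symmetric] field_simps)
qed

lemma sum_le_card_powr_mult_sum_powr:
  fixes b :: "'a \<Rightarrow> real"
  assumes "finite S" "\<And>i. i \<in> S \<Longrightarrow> 0 \<le> b i" "1 < r"
  shows "(\<Sum>i\<in>S. b i) \<le> real (card S) powr (1 - 1 / r) * (\<Sum>i\<in>S. b i powr r) powr (1 / r)"
proof -
  define P where "P = {i \<in> S. 0 < b i}"
  have "finite P" "P \<subseteq> S" using assms(1) by (auto simp: P_def)
  have sum_P: "(\<Sum>i\<in>S. b i) = (\<Sum>i\<in>P. b i)"
    using assms(1,2) unfolding P_def by (intro sum.mono_neutral_right) force+
  show ?thesis
  proof (cases "P = {}")
    case True
    then show ?thesis using sum_P by simp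
  next
    case False
    define c where "c = real (card P)"
    define B where "B = (\<Sum>i\<in>P. b i)"
    define Q where "Q = (\<Sum>i\<in>P. b i powr r)"
    have "0 < c" using False \<open>finite P\<close> by (simp add: c_def card_gt_0_iff)
    have "0 \<le> B" "0 \<le> Q" by (auto simp: B_def Q_def P_def intro: sum_nonneg)
    have "B / c = ((B / c) powr r) powr (1 / r)"
      using \<open>0 \<le> B\<close> \<open>0 < c\<close> assms(3) by (simp add: powr_powr)
    also have "\<dots> \<le> (Q / c) powr (1 / r)"
      using powr_mean_le_mean_powr[OF \<open>finite P\<close> False, of b r] assms(3) \<open>0 \<le> B\<close> \<open>0 < c\<close>
      unfolding B_def Q_def c_def by (intro powr_mono2) (auto simp: P_def)
    also have "\<dots> = Q powr (1 / r) / c powr (1 / r)"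
      using \<open>0 \<le> Q\<close> \<open>0 < c\<close> by (simp add: powr_divide)
    finally have "B \<le> c powr (1 - 1 / r) * Q powr (1 / r)"
      using \<open>0 < c\<close> by (simp add: powr_diff field_simps)
    also have "\<dots> \<le> real (card S) powr (1 - 1 / r) * (\<Sum>i\<in>S. b i powr r) powr (1 / r)"
    proof (intro mult_mono powr_mono2)
      show "c \<le> real (card S)" unfolding c_def using card_mono[OF assms(1) \<open>P \<subseteq> S\<close>] by simp
      show "Q \<le> (\<Sum>i\<in>S. b i powr r)" unfolding Q_def using assms(1) \<open>P \<subseteq> S\<close> by (intro sum_mono2) auto
    qed (use assms(3) \<open>0 < c\<close> \<open>0 \<le> Q\<close> in auto)
    finally show ?thesis using sum_P B_def by simp
  qed
qed

lemma sum_bnorm_le_mixnorm: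
  assumes "S \<subseteq> {..<p}" "card S \<le> k" "1 < q" "0 < p"
  shows "(\<Sum>i\<in>S. bnorm n h i) \<le> real k powr (1 - invq q) * mixnorm n p q h"
proof -
  have "finite S" using assms(1) finite_subset by blast
  show ?thesis
  proof (cases q)
    case (real r)
    then have "1 < r" using assms(3) by simp
    have "(\<Sum>i\<in>S. bnorm n h i) \<le> real (card S) powr (1 - 1 / r) * (\<Sum>i\<in>S. bnorm n h i powr r) powr (1 / r)"
      by (rule sum_le_card_powr_mult_sum_powr[OF \<open>finite S\<close> bnorm_nonneg \<open>1 < r\<close>])
    also have "\<dots> \<le> real k powr (1 - 1 / r) * (\<Sum>i<p. bnorm n h i powr r) powr (1 / r)"
    proof (intro mult_mono powr_mono2)
      show "(\<Sum>i\<in>S. bnorm n h i powr r) \<le> (\<Sum>i<p. bnorm n h i powr r)"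
        using assms(1) by (intro sum_mono2) auto
    qed (use \<open>1 < r\<close> assms(2) in \<open>auto intro: sum_nonneg\<close>)
    finally show ?thesis using real by (simp add: invq_def mixnorm_def)
  next
    case PInf
    have "(\<Sum>i\<in>S. bnorm n h i) \<le> (\<Sum>i\<in>S. mixnorm n p \<infinity> h)"
      using assms(1) \<open>finite S\<close> by (intro sum_mono) (auto simp: mixnorm_def)
    also have "\<dots> \<le> real k * mixnorm n p \<infinity> h"
      using assms(2) mixnorm_nonneg[OF assms(4)] by (simp add: mult_right_mono)
    finally show ?thesis using PInf by (simp add: invq_def)
  qed (use assms(3) in simp)
qed

section \<open>Euclidean norm and matrix-vector products\<close>

lemma norm2_nonneg: "0 \<le> norm2 m v"
  by (simp add: norm2_def sum_nonneg)

lemma norm2_power2: "(norm2 m v)^2 = (\<Sum>i<m. (v i)^2)"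
  by (simp add: norm2_def sum_nonneg)

lemma norm2_cong: "(\<And>i. i < m \<Longrightarrow> u i = v i) \<Longrightarrow> norm2 m u = norm2 m v"
  by (simp add: norm2_def)

lemma norm2_diff_le: "norm2 m (u - v) \<le> norm2 m u + norm2 m v"
  using L2_set_triangle_ineq[of u "\<lambda>i. - v i" "{..<m}"] by (simp add: norm2_def L2_set_def)

lemma norm2_diff_mult_power2:
  "(norm2 m (\<lambda>l. r l - t * w l))^2 = (norm2 m r)^2 - 2 * t * (\<Sum>l<m. r l * w l) + t^2 * (norm2 m w)^2"
proof -
  have "(\<Sum>l<m. (r l - t * w l)^2) = (\<Sum>l<m. (r l)^2 - 2 * t * (r l * w l) + t^2 * (w l)^2)"
    by (intro sum.cong refl) (simp add: power2_eq_square algebra_simps)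
  then show ?thesis
    by (simp add: norm2_power2 sum.distrib sum_subtractf sum_distrib_left)
qed

lemma matvec_diff: "matvec N A (u - v) = matvec N A u - matvec N A v"
  by (simp add: matvec_def fun_diff_def sum_subtractf right_diff_distrib fun_eq_iff)

lemma tmatvec_diff: "tmatvec m A (u - v) = tmatvec m A u - tmatvec m A v"
  by (simp add: tmatvec_def fun_diff_def sum_subtractf right_diff_distrib fun_eq_iff)

lemma tmatvec_cong: "(\<And>i. i < m \<Longrightarrow> u i = v i) \<Longrightarrow> tmatvec m A u = tmatvec m A v"
  by (simp add: tmatvec_def fun_eq_iff)

lemma sum_mult_matvec_eq_sum_mult_tmatvec:
  "(\<Sum>l<m. v l * matvec N A h l) = (\<Sum>j<N. h j * tmatvec m A v j)"
  unfolding matvec_def tmatvec_def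
  by (simp add: sum_distrib_left sum_distrib_right mult_ac sum.swap[of _ "{..<m}"])

lemma norm2_matvec_power2_le:
  "(norm2 m (matvec (p * n) A h))^2 \<le> norm21 n p h * mixnorm n p \<infinity> (tmatvec m A (matvec (p * n) A h))"
proof -
  have "(norm2 m (matvec (p * n) A h))^2 = (\<Sum>l<m. matvec (p * n) A h l * matvec (p * n) A h l)"
    unfolding norm2_power2 by (simp add: power2_eq_square)
  also have "\<dots> = (\<Sum>j<p * n. h j * tmatvec m A (matvec (p * n) A h) j)"
    by (rule sum_mult_matvec_eq_sum_mult_tmatvec)
  also have "\<dots> \<le> norm21 n p h * mixnorm n p \<infinity> (tmatvec m A (matvec (p * n) A h))"
    by (rule sum_mult_le_norm21_mult_mixnorm_inf)
  finally show ?thesis .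
qed

lemma in_RN_diff: "in_RN N u \<Longrightarrow> in_RN N v \<Longrightarrow> in_RN N (u - v)"
  by (simp add: in_RN_def)

section \<open>Best \<open>k\<close>-block approximation error and the restricted ratio \<open>\<beta>\<close>\<close>

lemma exists_block_sparse:
  assumes "1 \<le> n" "k \<le> p"
  shows "\<exists>z. in_RN (p * n) z \<and> norm20 n p z = k"
proof -
  define z :: "nat \<Rightarrow> real" where "z = (\<lambda>j. if j div n < k then 1 else 0)"
  have "in_RN (p * n) z"
    unfolding in_RN_def
  proof (intro allI impI)
    fix j assume "p * n \<le> j"
    then have "k * n \<le> j" using mult_le_mono1[OF assms(2)] order.trans by blast
    then show "z j = 0" using assms(1) by (simp add: z_def div_less_iff_less_mult)
  qed
  moreover have "bnorm n z i = (if i < k then sqrt n else 0)" for i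
    using assms(1) by (simp add: bnorm_def z_def)
  then have "{i. i < p \<and> bnorm n z i \<noteq> 0} = {..<k}"
    using assms by auto
  ultimately show ?thesis unfolding norm20_def by auto
qed

lemma le_phi:
  assumes "1 \<le> n" "k \<le> p"
    and "\<And>z. in_RN (p * n) z \<Longrightarrow> norm20 n p z = k \<Longrightarrow> c \<le> norm21 n p (x - z)"
  shows "c \<le> phi n p k x"
  unfolding phi_def using exists_block_sparse[OF assms(1,2)] assms(3)
  by (intro cInf_greatest) auto

lemma phi_nonneg: "1 \<le> n \<Longrightarrow> k \<le> p \<Longrightarrow> 0 \<le> phi n p k x"
  by (auto intro: le_phi norm21_nonneg)

lemma beta_le:
  assumes "in_RN (p * n) h" "h \<noteq> (\<lambda>_. 0)" "kq n p q h \<le> s" "0 < p"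
  shows "beta n p m q s A \<le> norm2 m (matvec (p * n) A h) / mixnorm n p q h"
  unfolding beta_def
proof (rule cInf_lower)
  show "bdd_below {norm2 m (matvec (p * n) A z) / mixnorm n p q z |z.
          in_RN (p * n) z \<and> z \<noteq> (\<lambda>_. 0) \<and> kq n p q z \<le> s}"
    by (rule bdd_belowI[of _ 0]) (auto intro!: divide_nonneg_nonneg norm2_nonneg mixnorm_nonneg assms(4))
qed (use assms in auto)

lemma invq_qexp_conjugate: "1 < q \<Longrightarrow> (1 - invq q) * qexp q = 1"
  by (cases q) (auto simp: invq_def qexp_def field_simps)

lemma qexp_pos: "1 < q \<Longrightarrow> 0 < qexp q"
  by (cases q) (auto simp: qexp_def)

lemma kq_le:
  assumes "0 < mixnorm n p q h" "norm21 n p h \<le> c * real k powr (1 - invq q) * mixnorm n p q h"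
    "0 < c" "1 < q"
  shows "kq n p q h \<le> c powr qexp q * real k"
proof -
  have "norm21 n p h / mixnorm n p q h \<le> c * real k powr (1 - invq q)"
    using assms(1,2) by (simp add: divide_le_eq)
  then have "kq n p q h \<le> (c * real k powr (1 - invq q)) powr qexp q"
    unfolding kq_def using qexp_pos[OF assms(4)] assms(1)
    by (intro powr_mono2) (auto intro: divide_nonneg_nonneg norm21_nonneg)
  also have "\<dots> = c powr qexp q * real k"
    using assms(3) by (simp add: powr_mult powr_powr invq_qexp_conjugate[OF assms(4)])
  finally show ?thesis .
qed

lemma beta_mult_mixnorm_le:
  assumes "in_RN (p * n) h" "0 < p" "1 < q" "0 < c"
    "norm21 n p h \<le> c * real k powr (1 - invq q) * mixnorm n p q h"
  shows "beta n p m q (c powr qexp q * real k) A * mixnorm n p q h \<le> norm2 m (matvec (p * n) A h)"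
proof (cases "mixnorm n p q h = 0")
  case True
  then show ?thesis by (simp add: norm2_nonneg)
next
  case False
  then have M: "0 < mixnorm n p q h" using mixnorm_nonneg[OF assms(2)] by (simp add: order_less_le)
  have "h \<noteq> (\<lambda>_. 0)" using False mixnorm_zero[OF assms(2)] by auto
  moreover have "kq n p q h \<le> c powr qexp q * real k"
    using kq_le[OF M assms(5,4,3)] .
  ultimately have "beta n p m q (c powr qexp q * real k) A \<le> norm2 m (matvec (p * n) A h) / mixnorm n p q h"
    using beta_le assms(1,2) by blast
  then show ?thesis using M by (simp add: le_divide_eq)
qed

section \<open>The cone inequality\<close>

lemma norm21_diff_le_support:
  fixes n p :: nat and x xh z :: "nat \<Rightarrow> real"
  defines "S \<equiv> {i. i < p \<and> bnorm n z i \<noteq> 0}"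
  shows "norm21 n p x - norm21 n p xh \<le> (\<Sum>i\<in>S. bnorm n (xh - x) i)
           - (\<Sum>i\<in>{..<p} - S. bnorm n (xh - x) i) + 2 * norm21 n p (x - z)"
proof -
  have "S \<subseteq> {..<p}" by (auto simp: S_def)
  have on_S: "bnorm n x i - bnorm n xh i \<le> bnorm n (xh - x) i" for i
    using bnorm_diff_le[of n xh "xh - x" i] by (simp add: fun_diff_def)
  have off_S: "bnorm n x i - bnorm n xh i \<le> 2 * bnorm n (x - z) i - bnorm n (xh - x) i"
    if "i \<in> {..<p} - S" for i
  proof -
    have "bnorm n (x - z) i = bnorm n x i"
      using that bnorm_eq_0_iff[of n z i] by (simp add: S_def bnorm_def)
    then show ?thesis using bnorm_diff_le[of n xh x i] by simp
  qed
  have "norm21 n p x - norm21 n p xh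
      = (\<Sum>i\<in>S. bnorm n x i - bnorm n xh i) + (\<Sum>i\<in>{..<p} - S. bnorm n x i - bnorm n xh i)"
    using norm21_split[OF \<open>S \<subseteq> {..<p}\<close>] by (simp add: sum_subtractf)
  also have "\<dots> \<le> (\<Sum>i\<in>S. bnorm n (xh - x) i)
      + (\<Sum>i\<in>{..<p} - S. 2 * bnorm n (x - z) i - bnorm n (xh - x) i)"
    by (intro add_mono sum_mono on_S off_S)
  also have "\<dots> = (\<Sum>i\<in>S. bnorm n (xh - x) i) - (\<Sum>i\<in>{..<p} - S. bnorm n (xh - x) i)
      + 2 * (\<Sum>i\<in>{..<p} - S. bnorm n (x - z) i)"
    by (simp add: sum_subtractf sum_distrib_left)
  finally show ?thesis
    using sum_mono2[of "{..<p}" "{..<p} - S" "bnorm n (x - z)"] by (simp add: norm21_def bnorm_nonneg)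
qed

lemma cone_bound:
  assumes "1 \<le> n" "1 \<le> k" "k \<le> p" "1 < q"
    and "- \<kappa> * norm21 n p (xh - x) \<le> norm21 n p x - norm21 n p xh"
  shows "(1 - \<kappa>) * norm21 n p (xh - x)
           \<le> 2 * (real k powr (1 - invq q) * mixnorm n p q (xh - x)) + 2 * phi n p k x"
proof -
  let ?L = "norm21 n p (xh - x)"
  let ?a = "real k powr (1 - invq q) * mixnorm n p q (xh - x)"
  have "((1 - \<kappa>) * ?L - 2 * ?a) / 2 \<le> phi n p k x"
  proof (rule le_phi[OF assms(1,3)])
    fix z assume "in_RN (p * n) z" "norm20 n p z = k"
    define S where "S = {i. i < p \<and> bnorm n z i \<noteq> 0}"
    have "S \<subseteq> {..<p}" by (auto simp: S_def)
    have "card S = k" using \<open>norm20 n p z = k\<close> by (simp add: norm20_def S_def)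
    have "(\<Sum>i\<in>S. bnorm n (xh - x) i) \<le> ?a"
      using assms \<open>card S = k\<close> by (intro sum_bnorm_le_mixnorm[OF \<open>S \<subseteq> {..<p}\<close>]) auto
    then show "((1 - \<kappa>) * ?L - 2 * ?a) / 2 \<le> norm21 n p (x - z)"
      using norm21_diff_le_support[where n = n and p = p and x = x and xh = xh and z = z, folded S_def]
        norm21_split[OF \<open>S \<subseteq> {..<p}\<close>, of n "xh - x"] assms(5)
      by (simp add: algebra_simps)
  qed
  then show ?thesis by simp
qed

lemma cone_dichotomy_bounds:
  fixes L M K C E ph :: real
  assumes "L \<le> C * (K * M + ph)" "0 \<le> ph" "0 < K" "0 < C" "0 \<le> E"
    and "L \<le> 2 * C * K * M \<Longrightarrow> M \<le> E"
  shows "M \<le> E + ph / K \<and> L \<le> C * K * E + 2 * C * ph"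
proof (cases "ph \<le> K * M")
  case True
  have "C * (K * M + ph) \<le> C * (K * M + K * M)"
    using True assms(4) by (intro mult_left_mono) auto
  then have "M \<le> E" using assms(1,6) by (simp add: algebra_simps)
  moreover have "C * (K * M + ph) \<le> C * (K * E + ph)"
    using \<open>M \<le> E\<close> assms(3,4) by (intro mult_left_mono) auto
  moreover have "0 \<le> C * ph" "0 \<le> ph / K" using assms(2-4) by simp_all
  ultimately show ?thesis using assms(1) by (simp add: algebra_simps)
next
  case False
  then have "M \<le> ph / K" using assms(3) by (simp add: field_simps)
  have "L \<le> C * (K * M + ph)" by (fact assms(1))
  also have "\<dots> \<le> C * (2 * ph)"
    using False assms(4) by (intro mult_left_mono) auto
  finally have "L \<le> 2 * C * ph" by (simp add: mult_ac)
  moreover have "0 \<le> C * K * E" using assms(3-5) by simp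
  ultimately show ?thesis using \<open>M \<le> ph / K\<close> assms(5) by linarith
qed

lemma recovery_error_bounds:
  assumes "1 \<le> n" "1 \<le> k" "k \<le> p" "1 < q" "\<kappa> < 1"
    and "in_RN (p * n) x" "in_RN (p * n) xh"
    and cone: "- \<kappa> * norm21 n p (xh - x) \<le> norm21 n p x - norm21 n p xh"
    and "0 \<le> E"
    and restricted:
      "\<lbrakk>beta n p m q ((4 / (1 - \<kappa>)) powr qexp q * real k) A * mixnorm n p q (xh - x)
          \<le> norm2 m (matvec (p * n) A (xh - x));
        norm21 n p (xh - x) \<le> 4 / (1 - \<kappa>) * real k powr (1 - invq q) * mixnorm n p q (xh - x)\<rbrakk>
       \<Longrightarrow> mixnorm n p q (xh - x) \<le> E"
  shows "mixnorm n p q (xh - x) \<le> E + real k powr (invq q - 1) * phi n p k x"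
    and "norm21 n p (xh - x) \<le> 2 / (1 - \<kappa>) * real k powr (1 - invq q) * E + 4 / (1 - \<kappa>) * phi n p k x"
proof -
  define K where "K = real k powr (1 - invq q)"
  define C where "C = 2 / (1 - \<kappa>)"
  have "0 < K" "0 < C" using assms(2,5) by (auto simp: K_def C_def)
  have "0 < p" using assms(2,3) by simp
  have "norm21 n p (xh - x) \<le> C * (K * mixnorm n p q (xh - x) + phi n p k x)"
    using cone_bound[OF assms(1-4) cone] assms(5) by (simp add: C_def K_def field_simps)
  moreover have "mixnorm n p q (xh - x) \<le> E" if "norm21 n p (xh - x) \<le> 2 * C * K * mixnorm n p q (xh - x)"
  proof (rule restricted)
    show "norm21 n p (xh - x) \<le> 4 / (1 - \<kappa>) * real k powr (1 - invq q) * mixnorm n p q (xh - x)"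
      using that by (simp add: C_def K_def)
    then show "beta n p m q ((4 / (1 - \<kappa>)) powr qexp q * real k) A * mixnorm n p q (xh - x)
        \<le> norm2 m (matvec (p * n) A (xh - x))"
      using assms(5) by (intro beta_mult_mixnorm_le in_RN_diff assms(4,6,7) \<open>0 < p\<close>) auto
  qed
  ultimately have "mixnorm n p q (xh - x) \<le> E + phi n p k x / K"
    "norm21 n p (xh - x) \<le> C * K * E + 2 * C * phi n p k x"
    using cone_dichotomy_bounds[OF _ phi_nonneg[OF assms(1,3)] \<open>0 < K\<close> \<open>0 < C\<close> \<open>0 \<le> E\<close>] by auto
  moreover have "phi n p k x / K = real k powr (invq q - 1) * phi n p k x"
    unfolding K_def using powr_minus[of "real k" "1 - invq q"] by (simp add: divide_inverse mult.commute)
  ultimately show "mixnorm n p q (xh - x) \<le> E + real k powr (invq q - 1) * phi n p k x"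
    and "norm21 n p (xh - x) \<le> 2 / (1 - \<kappa>) * real k powr (1 - invq q) * E + 4 / (1 - \<kappa>) * phi n p k x"
    by (simp_all add: C_def K_def)
qed

section \<open>Block basis pursuit, Dantzig selector and group lasso\<close>

lemma le_div_power2_if_power2_le_mult:
  fixes b M S c :: real
  assumes "0 < b" "0 \<le> M" "b * M \<le> S" "S^2 \<le> c * M" "0 \<le> c"
  shows "M \<le> c / b^2"
proof (cases "M = 0")
  case False
  have "(b * M)^2 \<le> S^2" using assms(1-3) by (intro power_mono) auto
  then have "b^2 * M * M \<le> c * M" using assms(4) by (simp add: power2_eq_square algebra_simps)
  then have "b^2 * M \<le> c" using False assms(2) by simp
  then show ?thesis using assms(1) by (simp add: field_simps)
qed (use assms in simp)

lemma powr_two_minus_double: "(x::real) powr (2 - 2 * a) = (x powr (1 - a))^2"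
proof -
  have "2 - 2 * a = (1 - a) + (1 - a)" by simp
  then show ?thesis by (simp only: powr_add power2_eq_square)
qed

lemma nonpos_if_le_mult_all_pos:
  fixes X D :: real
  assumes "\<And>t. 0 < t \<Longrightarrow> X \<le> t * D"
  shows "X \<le> 0"
proof (rule field_le_epsilon)
  fix e :: real
  assume "0 < e"
  show "X \<le> 0 + e"
  proof (cases "D \<le> 0")
    case True
    then show ?thesis using assms[of 1] \<open>0 < e\<close> by simp
  next
    case False
    then show ?thesis using assms[of "e / D"] \<open>0 < e\<close> by simp
  qed
qed

lemma matvec_diff_eq_residual_diff:
  "matvec N A (xh - x) = (y - matvec N A x) - (y - matvec N A xh)"
  by (simp add: matvec_diff fun_eq_iff)

lemma norm2_matvec_diff_power2_le:
  assumes "0 < p"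
    and "mixnorm n p \<infinity> (tmatvec m A (y - matvec (p * n) A x)) \<le> a"
    and "mixnorm n p \<infinity> (tmatvec m A (y - matvec (p * n) A xh)) \<le> c"
  shows "(norm2 m (matvec (p * n) A (xh - x)))^2 \<le> norm21 n p (xh - x) * (a + c)"
proof -
  let ?r = "tmatvec m A (y - matvec (p * n) A x)" and ?rh = "tmatvec m A (y - matvec (p * n) A xh)"
  have "(norm2 m (matvec (p * n) A (xh - x)))^2
      \<le> norm21 n p (xh - x) * mixnorm n p \<infinity> (tmatvec m A (matvec (p * n) A (xh - x)))"
    by (rule norm2_matvec_power2_le)
  also have "tmatvec m A (matvec (p * n) A (xh - x)) = ?r - ?rh"
    unfolding matvec_diff_eq_residual_diff[of "p * n" A xh x y] by (rule tmatvec_diff)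
  also have "norm21 n p (xh - x) * mixnorm n p \<infinity> (?r - ?rh) \<le> norm21 n p (xh - x) * (a + c)"
    using mixnorm_inf_diff_le[OF assms(1), of n ?r ?rh] assms(2,3)
    by (intro mult_left_mono norm21_nonneg) auto
  finally show ?thesis .
qed

lemma block_restriction:
  fixes g d :: "nat \<Rightarrow> real" and n p i :: nat
  assumes "i < p" "0 < n" and d_def: "d = (\<lambda>j. if j div n = i then g j else 0)"
  shows "in_RN (p * n) d" "norm21 n p d = bnorm n g i" "(\<Sum>j<p * n. d j * g j) = (bnorm n g i)^2"
proof -
  have d_block: "d (i' * n + j) = (if i' = i then g (i' * n + j) else 0)" if "j < n" for i' j
    using that by (simp add: d_def)
  then have "bnorm n d i' = (if i' = i then bnorm n g i else 0)" for i'
    by (simp add: bnorm_def)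
  then show "norm21 n p d = bnorm n g i"
    using assms(1) by (simp add: norm21_def)
  show "in_RN (p * n) d"
    unfolding in_RN_def
  proof (intro allI impI)
    fix j assume "p * n \<le> j"
    then have "\<not> j div n < p" using assms(2) by (simp add: div_less_iff_less_mult)
    then show "d j = 0" using assms(1) by (auto simp: d_def)
  qed
  have "(\<Sum>j<p * n. d j * g j) = (\<Sum>i'<p. \<Sum>j<n. d (i' * n + j) * g (i' * n + j))"
    by (rule sum_lessThan_mult_blocks)
  also have "\<dots> = (\<Sum>i'<p. if i' = i then (\<Sum>j<n. (g (i * n + j))^2) else 0)"
    by (intro sum.cong refl) (auto simp: d_block power2_eq_square)
  also have "\<dots> = (bnorm n g i)^2"
    using assms(1) by (simp add: bnorm_def sum_nonneg)
  finally show "(\<Sum>j<p * n. d j * g j) = (bnorm n g i)^2" .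
qed

lemma lasso_obj_add_mult_le:
  assumes "0 \<le> \<mu>" "0 \<le> t"
  shows "lasso_obj n p m A y \<mu> (\<lambda>j. xh j + t * d j)
    \<le> lasso_obj n p m A y \<mu> xh
       - t * (\<Sum>l<m. (y - matvec (p * n) A xh) l * matvec (p * n) A d l)
       + t^2 / 2 * (norm2 m (matvec (p * n) A d))^2 + t * \<mu> * norm21 n p d"
proof -
  define r where "r = y - matvec (p * n) A xh"
  define w where "w = matvec (p * n) A d"
  have "norm21 n p (\<lambda>j. xh j + t * d j) \<le> (\<Sum>i<p. bnorm n xh i + bnorm n (\<lambda>j. t * d j) i)"
    unfolding norm21_def by (intro sum_mono bnorm_add_le)
  then have norm21_le: "norm21 n p (\<lambda>j. xh j + t * d j) \<le> norm21 n p xh + t * norm21 n p d"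
    using assms(2) by (simp add: norm21_def bnorm_mult sum.distrib sum_distrib_left)
  have "y - matvec (p * n) A (\<lambda>j. xh j + t * d j) = (\<lambda>l. r l - t * w l)"
    unfolding r_def w_def by (simp add: matvec_def fun_eq_iff sum.distrib sum_distrib_left algebra_simps)
  then have "lasso_obj n p m A y \<mu> (\<lambda>j. xh j + t * d j)
      = 1/2 * ((norm2 m r)^2 - 2 * t * (\<Sum>l<m. r l * w l) + t^2 * (norm2 m w)^2)
        + \<mu> * norm21 n p (\<lambda>j. xh j + t * d j)"
    by (simp add: lasso_obj_def norm2_diff_mult_power2)
  also have "\<dots> \<le> 1/2 * ((norm2 m r)^2 - 2 * t * (\<Sum>l<m. r l * w l) + t^2 * (norm2 m w)^2)
        + \<mu> * (norm21 n p xh + t * norm21 n p d)"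
    using norm21_le assms(1) by (intro add_left_mono mult_left_mono)
  also have "\<dots> = lasso_obj n p m A y \<mu> xh - t * (\<Sum>l<m. r l * w l)
       + t^2 / 2 * (norm2 m w)^2 + t * \<mu> * norm21 n p d"
    by (simp add: lasso_obj_def r_def algebra_simps)
  finally show ?thesis unfolding r_def w_def .
qed

text \<open>Moving xh by t along the i-th block of g = A^T (y - A xh) changes the lasso objective by at
  most -t ||g_i||^2 + t mu ||g_i|| + O(t^2), so minimality forces ||g_i|| <= mu.\<close>
lemma lasso_sol_tmatvec_residual_le:
  assumes sol: "lasso_sol n p m A y \<mu> xh" and "0 < \<mu>" "0 < p"
  shows "mixnorm n p \<infinity> (tmatvec m A (y - matvec (p * n) A xh)) \<le> \<mu>"
proof -
  define g where "g = tmatvec m A (y - matvec (p * n) A xh)"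
  have "bnorm n g i \<le> \<mu>" if "i < p" for i
  proof (cases "n = 0")
    case True
    then show ?thesis using \<open>0 < \<mu>\<close> by (simp add: bnorm_def)
  next
    case False
    define d where "d = (\<lambda>j. if j div n = i then g j else 0)"
    define G where "G = bnorm n g i"
    define D where "D = (norm2 m (matvec (p * n) A d))^2"
    note d = block_restriction[OF \<open>i < p\<close> _ d_def, folded G_def]
    have corr: "(\<Sum>l<m. (y - matvec (p * n) A xh) l * matvec (p * n) A d l) = G^2"
      using sum_mult_matvec_eq_sum_mult_tmatvec[where v = "y - matvec (p * n) A xh" and h = d]
        d(3) False by (simp add: g_def)
    have "G^2 - \<mu> * G \<le> t * (D / 2)" if "0 < t" for t
    proof -
      have "in_RN (p * n) (\<lambda>j. xh j + t * d j)"
        using sol d(1) False by (simp add: lasso_sol_def in_RN_def)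
      then have "lasso_obj n p m A y \<mu> xh \<le> lasso_obj n p m A y \<mu> (\<lambda>j. xh j + t * d j)"
        using sol by (simp add: lasso_sol_def)
      also have "\<dots> \<le> lasso_obj n p m A y \<mu> xh - t * G^2 + t^2 / 2 * D + t * \<mu> * G"
        using lasso_obj_add_mult_le[of \<mu> t n p m A y xh d] \<open>0 < \<mu>\<close> \<open>0 < t\<close> d(2) False
        unfolding corr D_def by simp
      finally have "t * (G^2 - \<mu> * G) \<le> t * (t * (D / 2))"
        by (simp add: power2_eq_square algebra_simps)
      then show ?thesis using \<open>0 < t\<close> by simp
    qed
    then have "G * (G - \<mu>) \<le> 0"
      using nonpos_if_le_mult_all_pos[of "G^2 - \<mu> * G" "D / 2"] by (simp add: power2_eq_square algebra_simps)
    then show ?thesis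
      using bnorm_nonneg[of n g i] \<open>0 < \<mu>\<close> unfolding G_def by (smt (verit) mult_pos_pos)
  qed
  then show ?thesis
    using \<open>0 < p\<close> by (simp add: mixnorm_def g_def Max_le_iff lessThan_empty_iff)
qed

context
  fixes n p m k :: nat and A :: "nat \<Rightarrow> nat \<Rightarrow> real" and x y eps :: "nat \<Rightarrow> real" and q :: ereal
  assumes n1: "1 \<le> n" and k1: "1 \<le> k" and kp: "k \<le> p" and x_in: "in_RN (p * n) x"
    and y_eq: "\<forall>i<m. y i = matvec (p * n) A x i + eps i" and q1: "1 < q"
begin

private lemmas recovery_error_bounds_0 =
  recovery_error_bounds[where \<kappa> = 0, simplified diff_zero div_by_1 minus_zero mult_zero_left,
    OF n1 k1 kp q1 zero_less_one x_in]

private lemma residual_x: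
  "norm2 m (y - matvec (p * n) A x) = norm2 m eps"
  "tmatvec m A (y - matvec (p * n) A x) = tmatvec m A eps"
  using y_eq by (auto intro: norm2_cong tmatvec_cong)

lemma bp_error_bounds:
  assumes noise: "norm2 m eps \<le> \<zeta>" and sol: "bp_sol n p m A y \<zeta> xh"
    and "0 < beta n p m q (4 powr qexp q * real k) A"
  shows "mixnorm n p q (xh - x) \<le> 2 * \<zeta> / beta n p m q (4 powr qexp q * real k) A
           + real k powr (invq q - 1) * phi n p k x
      \<and> norm21 n p (xh - x)
        \<le> 4 * real k powr (1 - invq q) * \<zeta> / beta n p m q (4 powr qexp q * real k) A
           + 4 * phi n p k x"
proof -
  define b where "b = beta n p m q (4 powr qexp q * real k) A"
  have "0 < b" using assms(3) by (simp add: b_def)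
  have xh_in: "in_RN (p * n) xh" and feasible: "norm2 m (y - matvec (p * n) A xh) \<le> \<zeta>"
    using sol by (auto simp: bp_sol_def)
  have "norm21 n p xh \<le> norm21 n p x"
    using sol x_in residual_x noise by (simp add: bp_sol_def)
  moreover have "0 \<le> 2 * \<zeta> / b" using noise norm2_nonneg[of m eps] \<open>0 < b\<close> by simp
  moreover have "mixnorm n p q (xh - x) \<le> 2 * \<zeta> / b"
    if "b * mixnorm n p q (xh - x) \<le> norm2 m (matvec (p * n) A (xh - x))"
  proof -
    have "norm2 m (matvec (p * n) A (xh - x)) \<le> 2 * \<zeta>"
      using norm2_diff_le[of m "y - matvec (p * n) A x" "y - matvec (p * n) A xh"] residual_x noise feasible
      unfolding matvec_diff_eq_residual_diff[of "p * n" A xh x y] by linarith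
    then show ?thesis using that \<open>0 < b\<close> by (simp add: le_divide_eq mult.commute)
  qed
  ultimately show ?thesis
    using recovery_error_bounds_0[OF xh_in, of "2 * \<zeta> / b" m A] by (simp add: b_def)
qed

lemma ds_error_bounds:
  assumes noise: "mixnorm n p \<infinity> (tmatvec m A eps) \<le> \<mu>" and sol: "ds_sol n p m A y \<mu> xh"
    and "0 < \<mu>" and "0 < beta n p m q (4 powr qexp q * real k) A"
  shows "mixnorm n p q (xh - x)
        \<le> 8 * real k powr (1 - invq q) / (beta n p m q (4 powr qexp q * real k) A)^2 * \<mu>
           + real k powr (invq q - 1) * phi n p k x
      \<and> norm21 n p (xh - x)
        \<le> 16 * real k powr (2 - 2 * invq q) / (beta n p m q (4 powr qexp q * real k) A)^2 * \<mu>
           + 4 * phi n p k x"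
proof -
  define b where "b = beta n p m q (4 powr qexp q * real k) A"
  define K where "K = real k powr (1 - invq q)"
  have "0 < b" "0 < K" "0 < p" using assms(4) k1 kp by (auto simp: b_def K_def)
  have xh_in: "in_RN (p * n) xh"
    and feasible: "mixnorm n p \<infinity> (tmatvec m A (y - matvec (p * n) A xh)) \<le> \<mu>"
    using sol by (auto simp: ds_sol_def)
  have "norm21 n p xh \<le> norm21 n p x"
    using sol x_in residual_x noise by (simp add: ds_sol_def)
  moreover have "0 \<le> 8 * K / b^2 * \<mu>" using \<open>0 < K\<close> \<open>0 < \<mu>\<close> by simp
  moreover have "mixnorm n p q (xh - x) \<le> 8 * K / b^2 * \<mu>"
    if "b * mixnorm n p q (xh - x) \<le> norm2 m (matvec (p * n) A (xh - x))"
      and "norm21 n p (xh - x) \<le> 4 * K * mixnorm n p q (xh - x)"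
  proof -
    have "(norm2 m (matvec (p * n) A (xh - x)))^2 \<le> norm21 n p (xh - x) * (\<mu> + \<mu>)"
      using residual_x noise feasible by (intro norm2_matvec_diff_power2_le \<open>0 < p\<close>) auto
    also have "\<dots> \<le> (4 * K * mixnorm n p q (xh - x)) * (\<mu> + \<mu>)"
      using that(2) \<open>0 < \<mu>\<close> by (intro mult_right_mono) auto
    finally have "(norm2 m (matvec (p * n) A (xh - x)))^2 \<le> (8 * K * \<mu>) * mixnorm n p q (xh - x)"
      by (simp add: algebra_simps)
    from le_div_power2_if_power2_le_mult[OF \<open>0 < b\<close> mixnorm_nonneg[OF \<open>0 < p\<close>] that(1) this]
    show ?thesis using \<open>0 < K\<close> \<open>0 < \<mu>\<close> by simp
  qed
  ultimately have "mixnorm n p q (xh - x) \<le> 8 * K / b^2 * \<mu> + real k powr (invq q - 1) * phi n p k x"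
    and "norm21 n p (xh - x) \<le> 2 * K * (8 * K / b^2 * \<mu>) + 4 * phi n p k x"
    using recovery_error_bounds_0[OF xh_in, of "8 * K / b^2 * \<mu>" m A] by (simp_all add: b_def K_def)
  moreover have "2 * K * (8 * K / b^2 * \<mu>) = 16 * K^2 / b^2 * \<mu>"
    by (simp add: power2_eq_square)
  ultimately show ?thesis
    unfolding powr_two_minus_double b_def[symmetric] K_def[symmetric] by linarith
qed

lemma lasso_cone:
  assumes noise: "mixnorm n p \<infinity> (tmatvec m A eps) \<le> \<kappa> * \<mu>" and sol: "lasso_sol n p m A y \<mu> xh"
    and "0 < \<mu>"
  shows "- \<kappa> * norm21 n p (xh - x) \<le> norm21 n p x - norm21 n p xh"
proof -
  define w where "w = matvec (p * n) A (xh - x)"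
  have "norm2 m (y - matvec (p * n) A xh) = norm2 m (\<lambda>l. eps l - 1 * w l)"
    using y_eq unfolding w_def matvec_diff by (intro norm2_cong) simp
  then have res_xh: "(norm2 m (y - matvec (p * n) A xh))^2
      = (norm2 m eps)^2 - 2 * (\<Sum>l<m. eps l * w l) + (norm2 m w)^2"
    by (simp only: norm2_diff_mult_power2) simp
  have "lasso_obj n p m A y \<mu> xh \<le> lasso_obj n p m A y \<mu> x"
    using sol x_in by (simp add: lasso_sol_def)
  then have obj: "\<mu> * norm21 n p xh + (norm2 m w)^2 / 2 \<le> \<mu> * norm21 n p x + (\<Sum>l<m. eps l * w l)"
    unfolding lasso_obj_def res_xh residual_x by (simp add: algebra_simps)
  have "(\<Sum>l<m. eps l * w l) = (\<Sum>j<p * n. (xh - x) j * tmatvec m A eps j)"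
    unfolding w_def by (rule sum_mult_matvec_eq_sum_mult_tmatvec)
  also have "\<dots> \<le> norm21 n p (xh - x) * mixnorm n p \<infinity> (tmatvec m A eps)"
    by (rule sum_mult_le_norm21_mult_mixnorm_inf)
  also have "\<dots> \<le> norm21 n p (xh - x) * (\<kappa> * \<mu>)"
    using noise by (intro mult_left_mono norm21_nonneg)
  finally have "(\<Sum>l<m. eps l * w l) \<le> \<mu> * (\<kappa> * norm21 n p (xh - x))"
    by (simp add: mult_ac)
  then have "\<mu> * norm21 n p xh \<le> \<mu> * (norm21 n p x + \<kappa> * norm21 n p (xh - x))"
    unfolding distrib_left using obj zero_le_power2[of "norm2 m w"] by linarith
  then have "norm21 n p xh \<le> norm21 n p x + \<kappa> * norm21 n p (xh - x)"
    using \<open>0 < \<mu>\<close> by simp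
  then show ?thesis by (simp add: algebra_simps)
qed

lemma lasso_error_bounds:
  assumes "0 < \<kappa>" "\<kappa> < 1" and noise: "mixnorm n p \<infinity> (tmatvec m A eps) \<le> \<kappa> * \<mu>"
    and sol: "lasso_sol n p m A y \<mu> xh" and "0 < \<mu>"
    and "0 < beta n p m q ((4 / (1 - \<kappa>)) powr qexp q * real k) A"
  shows "mixnorm n p q (xh - x) \<le> (1 + \<kappa>) / (1 - \<kappa>)
             * (4 * real k powr (1 - invq q) / (beta n p m q ((4 / (1 - \<kappa>)) powr qexp q * real k) A)^2) * \<mu>
           + real k powr (invq q - 1) * phi n p k x
      \<and> norm21 n p (xh - x) \<le> (1 + \<kappa>) / (1 - \<kappa>)^2
             * (8 * real k powr (2 - 2 * invq q) / (beta n p m q ((4 / (1 - \<kappa>)) powr qexp q * real k) A)^2) * \<mu>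
           + 4 / (1 - \<kappa>) * phi n p k x"
proof -
  define b where "b = beta n p m q ((4 / (1 - \<kappa>)) powr qexp q * real k) A"
  define K where "K = real k powr (1 - invq q)"
  define E where "E = (1 + \<kappa>) / (1 - \<kappa>) * (4 * K / b^2) * \<mu>"
  have "0 < b" "0 < K" "0 < p" using assms(6) k1 kp by (auto simp: b_def K_def)
  have xh_in: "in_RN (p * n) xh" using sol by (simp add: lasso_sol_def)
  have "0 \<le> E" using \<open>0 < K\<close> \<open>0 < \<mu>\<close> assms(1,2) by (simp add: E_def)
  moreover have "mixnorm n p q (xh - x) \<le> E"
    if "b * mixnorm n p q (xh - x) \<le> norm2 m (matvec (p * n) A (xh - x))"
      and "norm21 n p (xh - x) \<le> 4 / (1 - \<kappa>) * K * mixnorm n p q (xh - x)"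
  proof -
    have "(norm2 m (matvec (p * n) A (xh - x)))^2 \<le> norm21 n p (xh - x) * (\<kappa> * \<mu> + \<mu>)"
      using residual_x noise lasso_sol_tmatvec_residual_le[OF sol \<open>0 < \<mu>\<close> \<open>0 < p\<close>]
      by (intro norm2_matvec_diff_power2_le \<open>0 < p\<close>) auto
    also have "\<dots> \<le> (4 / (1 - \<kappa>) * K * mixnorm n p q (xh - x)) * (\<kappa> * \<mu> + \<mu>)"
      using that(2) \<open>0 < \<mu>\<close> assms(1) by (intro mult_right_mono) auto
    finally have "(norm2 m (matvec (p * n) A (xh - x)))^2
        \<le> (4 / (1 - \<kappa>) * K * (\<kappa> * \<mu> + \<mu>)) * mixnorm n p q (xh - x)"
      by (simp add: algebra_simps)
    from le_div_power2_if_power2_le_mult[OF \<open>0 < b\<close> mixnorm_nonneg[OF \<open>0 < p\<close>] that(1) this]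
    show ?thesis using \<open>0 < K\<close> \<open>0 < \<mu>\<close> assms(1,2) by (simp add: E_def field_simps)
  qed
  ultimately have "mixnorm n p q (xh - x) \<le> E + real k powr (invq q - 1) * phi n p k x"
    and "norm21 n p (xh - x) \<le> 2 / (1 - \<kappa>) * K * E + 4 / (1 - \<kappa>) * phi n p k x"
    using recovery_error_bounds[OF n1 k1 kp q1 assms(2) x_in xh_in lasso_cone[OF noise sol \<open>0 < \<mu>\<close>]]
    unfolding b_def K_def by blast+
  moreover have "2 / (1 - \<kappa>) * K * E = (1 + \<kappa>) / (1 - \<kappa>)^2 * (8 * K^2 / b^2) * \<mu>"
    using assms(2) unfolding E_def by (simp add: field_simps power2_eq_square)
  ultimately show ?thesis
    unfolding powr_two_minus_double b_def[symmetric] K_def[symmetric] E_def[symmetric] by simp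
qed

end

theorem theorem2:
  fixes n p m k :: nat and A :: "nat \<Rightarrow> nat \<Rightarrow> real"
    and x y eps :: "nat \<Rightarrow> real" and q :: ereal and \<zeta> \<mu> :: real
  assumes "1 \<le> n" and "1 \<le> k" and "k \<le> p"
    and "in_RN (p * n) x"
    and "\<forall>i<m. y i = matvec (p * n) A x i + eps i"
    and "1 < q"
    and "0 \<le> \<zeta>" and "0 < \<mu>"
  shows
   "(norm2 m eps \<le> \<zeta> \<longrightarrow>
      (\<forall>xh. bp_sol n p m A y \<zeta> xh \<longrightarrow>
        (let b = beta n p m q (4 powr qexp q * real k) A in
         0 < b \<longrightarrow>
           mixnorm n p q (xh - x) \<le> 2 * \<zeta> / b + real k powr (invq q - 1) * phi n p k x \<and>
           norm21 n p (xh - x) \<le> 4 * real k powr (1 - invq q) * \<zeta> / b + 4 * phi n p k x)))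
    \<and>
    (mixnorm n p \<infinity> (tmatvec m A eps) \<le> \<mu> \<longrightarrow>
      (\<forall>xh. ds_sol n p m A y \<mu> xh \<longrightarrow>
        (let b = beta n p m q (4 powr qexp q * real k) A in
         0 < b \<longrightarrow>
           mixnorm n p q (xh - x) \<le> 8 * real k powr (1 - invq q) / b^2 * \<mu>
              + real k powr (invq q - 1) * phi n p k x \<and>
           norm21 n p (xh - x) \<le> 16 * real k powr (2 - 2 * invq q) / b^2 * \<mu>
              + 4 * phi n p k x)))
    \<and>
    (\<forall>\<kappa>::real. 0 < \<kappa> \<and> \<kappa> < 1 \<and> mixnorm n p \<infinity> (tmatvec m A eps) \<le> \<kappa> * \<mu> \<longrightarrow>
      (\<forall>xh. lasso_sol n p m A y \<mu> xh \<longrightarrow>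
        (let b = beta n p m q ((4 / (1 - \<kappa>)) powr qexp q * real k) A in
         0 < b \<longrightarrow>
           mixnorm n p q (xh - x) \<le> (1 + \<kappa>) / (1 - \<kappa>) * (4 * real k powr (1 - invq q) / b^2) * \<mu>
              + real k powr (invq q - 1) * phi n p k x \<and>
           norm21 n p (xh - x) \<le> (1 + \<kappa>) / (1 - \<kappa>)^2 * (8 * real k powr (2 - 2 * invq q) / b^2) * \<mu>
              + 4 / (1 - \<kappa>) * phi n p k x)))"
  using bp_error_bounds[OF assms(1-6)] ds_error_bounds[OF assms(1-6) _ _ assms(8)]
    lasso_error_bounds[OF assms(1-6) _ _ _ _ assms(8)]
  by (simp add: Let_def)

end
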